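(* Let $\Omega$ be a region of $\mathbb{C}$ and let $F:\Omega\to\mathbb{M}_n$ be analytic. The following statements are equivalent: (1) $F(z)$ is constant on $\Omega$; (2) for every $k=1,\ldots,n$, $s_k(F(z))$ is constant on $\Omega$; (3) for every $k=1,\ldots,n$, $s_k(F(z))$ attains its maximum value over $\Omega$ at some point $z_k\in\Omega$; (4) $\|F(z)\|_{\mathcal{F}}$ is constant on $\Omega$; (5) $\|F(z)\|_{\mathcal{F}}$ attains its maximum value over $\Omega$ at some point $z_0\in\Omega$.
   Context: A region is a nonempty open connected subset of $\mathbb{C}$. $\mathbb{M}_n$ is the set of $n\times n$ complex matrices; $F$ is analytic if each entry is analytic. For $A\in\mathbb{M}_n$, the singular values $s_1(A)\geq\cdots\geq s_n(A)$ are the nonnegative square roots of the eigenvalues of $A^*A$ in nonincreasing order. $\|T\|_{\mathcal{F}}=(\operatorname{trace}(T^*T))^{1/2}$ is the Frobenius (Hilbert--Schmidt) norm. *)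

theory Defs
  imports "HOL-Analysis.Complex_Analysis_Basics" "Jordan_Normal_Form.Schur_Decomposition"
begin

text \<open>Used only for the Hermitian positive semidefinite matrix A^* A, whose eigenvalues are real.\<close>
definition eigenvalues_desc :: "complex mat \<Rightarrow> real list" where
  "eigenvalues_desc A = rev (sorted_list_of_multiset (image_mset Re (proots (char_poly A))))"

definition singular_value :: "complex mat \<Rightarrow> nat \<Rightarrow> real" where
  "singular_value A k = sqrt (eigenvalues_desc (mat_adjoint A * A) ! (k - 1))"

definition mat_trace :: "complex mat \<Rightarrow> complex" where
  "mat_trace A = (\<Sum>i<dim_row A. A $$ (i, i))"

definition frobenius_norm :: "complex mat \<Rightarrow> real" where
  "frobenius_norm T = sqrt (Re (mat_trace (mat_adjoint T * T)))"

end

theory Submission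
  imports Defs "HOL-Complex_Analysis.Conformal_Mappings"
begin

(* The squared Frobenius norm of F(z) is the sum of the squared moduli of its
  entries f_ij(z). If it is maximal at z0, then g = sum of conj (f_ij z0) * f_ij has
  Re g <= (|F z|^2 + |F z0|^2) / 2 <= Re (g z0), so by the maximum modulus principle (for exp g)
  Re g is constant, which forces sum |f_ij z - f_ij z0|^2 = 0, i.e. F is constant.
  For singular values use Ky Fan's principle: s_1^2 + ... + s_k^2 of A is the maximum of
  |A V|_F^2 over n x k isometries V, attained at eigenvectors of A^* A (spectral theorem).
  If this sum is maximal at z0 with maximiser V, the Frobenius argument applied to F(z) V
  shows that F(z) V is constant, hence the sum is constant. Inducting on k, maxima of the
  s_k make all these sums constant, in particular |F(z)|_F^2 = s_1^2 + ... + s_n^2. *)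

section \<open>Adjoints and isometries\<close>

lemma index_mult_mat_sum:
  assumes "A \<in> carrier_mat n m" "B \<in> carrier_mat m p" "i < n" "j < p"
  shows "(A * B) $$ (i, j) = (\<Sum>l<m. A $$ (i, l) * B $$ (l, j))"
  using assms by (auto simp: scalar_prod_def lessThan_atLeast0 intro: sum.cong)

lemma mat_adjoint_dim [simp]:
  "dim_row (mat_adjoint A) = dim_col A" "dim_col (mat_adjoint A) = dim_row A"
  by (auto simp: mat_adjoint_def)

lemma index_mat_adjoint [simp]:
  "i < dim_col A \<Longrightarrow> j < dim_row A \<Longrightarrow> mat_adjoint A $$ (i, j) = conjugate (A $$ (j, i))"
  by (auto simp: mat_adjoint_def mat_of_rows_index)

lemma mat_adjoint_carrier [simp]: "mat_adjoint A \<in> carrier_mat m n \<longleftrightarrow> A \<in> carrier_mat n m"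
  unfolding carrier_mat_def by auto

lemma mat_adjoint_adjoint [simp]: "mat_adjoint (mat_adjoint A) = A"
  by (rule eq_matI) auto

lemma mat_adjoint_mult:
  fixes A :: "'a :: conjugatable_field mat"
  assumes A: "A \<in> carrier_mat n m" and B: "B \<in> carrier_mat m p"
  shows "mat_adjoint (A * B) = mat_adjoint B * mat_adjoint A"
proof (rule eq_matI)
  fix i j assume "i < dim_row (mat_adjoint B * mat_adjoint A)" "j < dim_col (mat_adjoint B * mat_adjoint A)"
  then have i: "i < p" and j: "j < n" using assms by auto
  have "mat_adjoint (A * B) $$ (i, j) = conjugate (\<Sum>l<m. A $$ (j, l) * B $$ (l, i))"
    using assms i j by (simp add: index_mult_mat_sum[OF A B j i])
  also have "\<dots> = (\<Sum>l<m. conjugate (B $$ (l, i)) * conjugate (A $$ (j, l)))"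
    by (simp add: sum_conjugate conjugate_dist_mul mult.commute)
  also have "\<dots> = (mat_adjoint B * mat_adjoint A) $$ (i, j)"
    using assms i j by (subst index_mult_mat_sum[of _ p m _ n]) auto
  finally show "mat_adjoint (A * B) $$ (i, j) = (mat_adjoint B * mat_adjoint A) $$ (i, j)" .
qed (use assms in auto)

lemma conjugate_one [simp]: "conjugate (1 :: 'a :: conjugatable_field) = 1"
  by (metis conjugate_dist_mul conjugate_id mult_1_left mult_1_right)

definition isometry_mat :: "nat \<Rightarrow> nat \<Rightarrow> 'a :: conjugatable_field mat \<Rightarrow> bool" where
  "isometry_mat n k V \<longleftrightarrow> V \<in> carrier_mat n k \<and> mat_adjoint V * V = 1\<^sub>m k"

lemma isometry_matD:
  assumes "isometry_mat n k V"
  shows "V \<in> carrier_mat n k" "mat_adjoint V * V = 1\<^sub>m k"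
  using assms unfolding isometry_mat_def by auto

lemma unitary_mult_adjoint:
  assumes "isometry_mat n n U"
  shows "U * mat_adjoint U = 1\<^sub>m n"
  using isometry_matD[OF assms] mat_mult_left_right_inverse[of "mat_adjoint U" n U] by auto

lemma isometry_mat_adjoint:
  assumes "isometry_mat n n U"
  shows "isometry_mat n n (mat_adjoint U)"
  using isometry_matD[OF assms] unitary_mult_adjoint[OF assms] unfolding isometry_mat_def by auto

lemma isometry_mat_mult:
  assumes W: "isometry_mat n m W" and V: "isometry_mat m k V"
  shows "isometry_mat n k (W * V)"
proof -
  note Wc = isometry_matD(1)[OF W] and Vc = isometry_matD(1)[OF V]
  have "mat_adjoint (W * V) * (W * V) = mat_adjoint V * (mat_adjoint W * W) * V"
    using Wc Vc by (simp add: mat_adjoint_mult assoc_mult_mat[of _ k m _ n _ k]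
        assoc_mult_mat[of _ k m _ m _ k] assoc_mult_mat[of _ k m _ n _ m])
  also have "\<dots> = 1\<^sub>m k" using isometry_matD[OF W] isometry_matD[OF V] by simp
  finally show ?thesis using Wc Vc unfolding isometry_mat_def by simp
qed

lemma unitary_similar_mat:
  assumes "isometry_mat n n W" "H \<in> carrier_mat n n"
  shows "similar_mat (mat_adjoint W * H * W) H"
  using assms isometry_matD[OF assms(1)] unitary_mult_adjoint[OF assms(1)]
  by (intro similar_matI[of _ _ "mat_adjoint W" W n]) auto

lemma cnj_mult_self_cmod: "cnj z * z = complex_of_real ((cmod z)\<^sup>2)"
  by (metis complex_norm_square mult.commute of_real_power)

lemma cscalar_prod_smult:
  fixes v w :: "complex vec"
  assumes "v \<in> carrier_vec n" "w \<in> carrier_vec n"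
  shows "(a \<cdot>\<^sub>v v) \<bullet>c (b \<cdot>\<^sub>v w) = a * cnj b * (v \<bullet>c w)"
  using assms by (simp add: conjugate_smult_vec mult.assoc)

lemma cscalar_prod_self_real_pos:
  fixes v :: "complex vec"
  assumes "v \<in> carrier_vec n" "v \<noteq> 0\<^sub>v n"
  shows "v \<bullet>c v = complex_of_real (Re (v \<bullet>c v))" "Re (v \<bullet>c v) > 0"
  using conjugate_square_greater_0_vec[OF assms(1)] assms(2)
  by (auto simp: less_complex_def complex_eq_iff)

lemma isometry_mat_of_cols:
  fixes ws :: "complex vec list"
  assumes ws: "set ws \<subseteq> carrier_vec n" "length ws = k"
    and orthonormal: "\<And>i j. i < k \<Longrightarrow> j < k \<Longrightarrow> ws ! j \<bullet>c ws ! i = (if i = j then 1 else 0)"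
  shows "isometry_mat n k (mat_of_cols n ws)"
  unfolding isometry_mat_def
proof (intro conjI eq_matI)
  fix i j assume "i < dim_row (1\<^sub>m k :: complex mat)" "j < dim_col (1\<^sub>m k :: complex mat)"
  then have i: "i < k" and j: "j < k" by auto
  then have "ws ! i \<in> carrier_vec n" "ws ! j \<in> carrier_vec n" using ws by auto
  then have "(mat_adjoint (mat_of_cols n ws) * mat_of_cols n ws) $$ (i, j) = conjugate (ws ! i) \<bullet> ws ! j"
    using ws i j by (simp add: mat_adjoint_def)
  also have "\<dots> = ws ! j \<bullet>c ws ! i"
    using ws i j by (subst conjugate_vec_sprod_comm[of _ n]) auto
  finally show "(mat_adjoint (mat_of_cols n ws) * mat_of_cols n ws) $$ (i, j) = 1\<^sub>m k $$ (i, j)"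
    using orthonormal[OF i j] i j by simp
qed (use ws in auto)

definition normalize_cvec :: "complex vec \<Rightarrow> complex vec" where
  "normalize_cvec w = complex_of_real (1 / sqrt (Re (w \<bullet>c w))) \<cdot>\<^sub>v w"

lemma isometry_mat_of_normalized_cols:
  fixes ws :: "complex vec list"
  assumes orth: "corthogonal ws" and ws: "set ws \<subseteq> carrier_vec n"
  shows "isometry_mat n (length ws) (mat_of_cols n (map normalize_cvec ws))"
proof (rule isometry_mat_of_cols)
  show "set (map normalize_cvec ws) \<subseteq> carrier_vec n" "length (map normalize_cvec ws) = length ws"
    using ws by (auto simp: normalize_cvec_def)
  fix i j assume i: "i < length ws" and j: "j < length ws"
  define c where "c w = complex_of_real (1 / sqrt (Re (w \<bullet>c w)))" for w
  have wsi: "ws ! i \<in> carrier_vec n" "ws ! i \<noteq> 0\<^sub>v n"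
    using i ws corthogonalD[OF orth i i] by auto
  have wsj: "ws ! j \<in> carrier_vec n" using j ws by auto
  have "normalize_cvec w = c w \<cdot>\<^sub>v w" for w unfolding normalize_cvec_def c_def ..
  then have "map normalize_cvec ws ! j \<bullet>c map normalize_cvec ws ! i
      = c (ws ! j) * cnj (c (ws ! i)) * (ws ! j \<bullet>c ws ! i)"
    unfolding nth_map[OF i] nth_map[OF j] by (simp only: cscalar_prod_smult[OF wsj wsi(1)])
  also have "\<dots> = (if i = j then 1 else 0)"
  proof (cases "i = j")
    case True
    define r where "r = Re (ws ! i \<bullet>c ws ! i)"
    have r: "ws ! i \<bullet>c ws ! i = complex_of_real r" "r > 0"
      using cscalar_prod_self_real_pos[OF wsi] unfolding r_def by auto
    have "c (ws ! i) * cnj (c (ws ! i)) * (ws ! i \<bullet>c ws ! i) = complex_of_real (r / (sqrt r)\<^sup>2)"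
      unfolding c_def r(1) r_def[symmetric] using r(2)
      by (simp add: power2_eq_square flip: of_real_mult)
    then show ?thesis using True r(2) by simp
  next
    case False
    then show ?thesis using corthogonalD[OF orth j i] by simp
  qed
  finally show "map normalize_cvec ws ! j \<bullet>c map normalize_cvec ws ! i = (if i = j then 1 else 0)" .
qed

lemma unitary_completion:
  fixes v :: "complex vec"
  assumes v: "v \<in> carrier_vec n" and v0: "v \<noteq> 0\<^sub>v n"
  shows "\<exists>W c. isometry_mat n n W \<and> col W 0 = c \<cdot>\<^sub>v v"
proof -
  interpret cof_vec_space n "TYPE(complex)" .
  define ws where "ws = gram_schmidt n (basis_completion v)"
  note bc = basis_completion[OF v v0]
  have ws: "corthogonal ws" "set ws \<subseteq> carrier_vec n" "length ws = n"
    using gram_schmidt_result[OF bc(2) bc(4) bc(5) ws_def] bc(6) by auto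
  have "n > 0" using v v0 by (cases n) auto
  then obtain vs where "basis_completion v = v # vs" using bc(6,7) by (cases "basis_completion v") auto
  then have "ws ! 0 = v" using gram_schmidt_hd[OF v] \<open>n > 0\<close> ws(3) unfolding ws_def
    by (metis hd_conv_nth list.size(3) not_less_zero)
  then have "col (mat_of_cols n (map normalize_cvec ws)) 0 = normalize_cvec v"
    using \<open>n > 0\<close> ws(2,3) by (subst col_mat_of_cols) (auto simp: normalize_cvec_def)
  then show ?thesis
    using isometry_mat_of_normalized_cols[OF ws(1,2)] ws(3) unfolding normalize_cvec_def by auto
qed

section \<open>The spectral theorem for Hermitian matrices\<close>

definition diag_block :: "'a :: zero \<Rightarrow> 'a mat \<Rightarrow> 'a mat" where
  "diag_block c M = four_block_mat (mat 1 1 (\<lambda>_. c)) (0\<^sub>m 1 (dim_col M)) (0\<^sub>m (dim_row M) 1) M"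

lemma diag_block_carrier [simp]:
  "M \<in> carrier_mat m m \<Longrightarrow> diag_block c M \<in> carrier_mat (Suc m) (Suc m)"
  unfolding diag_block_def carrier_mat_def by simp

lemma diag_block_dim [simp]:
  "dim_row (diag_block c M) = Suc (dim_row M)" "dim_col (diag_block c M) = Suc (dim_col M)"
  unfolding diag_block_def by simp_all

lemma index_diag_block:
  "i < Suc (dim_row M) \<Longrightarrow> j < Suc (dim_col M) \<Longrightarrow> diag_block c M $$ (i, j) =
    (if i = 0 \<and> j = 0 then c else if i = 0 \<or> j = 0 then 0 else M $$ (i - 1, j - 1))"
  by (auto simp: diag_block_def)

lemma diag_block_mult:
  fixes A :: "'a :: comm_ring_1 mat"
  assumes "A \<in> carrier_mat m m" "B \<in> carrier_mat m m"
  shows "diag_block a A * diag_block b B = diag_block (a * b) (A * B)"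
  using assms unfolding diag_block_def
  by (subst mult_four_block_mat[where ?n1.0 = 1 and ?n2.0 = m]) (auto intro!: eq_matI simp: scalar_prod_def)

lemma mat_adjoint_diag_block:
  assumes "M \<in> carrier_mat m m"
  shows "mat_adjoint (diag_block c M) = diag_block (conjugate c) (mat_adjoint M)"
  using assms by (intro eq_matI) (auto simp: index_diag_block)

lemma diag_block_one: "diag_block 1 (1\<^sub>m m) = 1\<^sub>m (Suc m)"
  by (rule eq_matI) (auto simp: index_diag_block)

lemma mat_diag_Suc: "mat_diag (Suc m) f = diag_block (f 0) (mat_diag m (\<lambda>i. f (Suc i)))"
  by (rule eq_matI) (auto simp: index_diag_block mat_diag_def)

lemma char_poly_diag_block:
  assumes "M \<in> carrier_mat m m"
  shows "char_poly (diag_block e M) = [:-e, 1:] * char_poly M"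
proof -
  have "char_poly (diag_block e M) = char_poly (mat 1 1 (\<lambda>_. e)) * char_poly M"
    unfolding diag_block_def using assms by (intro char_poly_four_block_zeros_col) auto
  also have "char_poly (mat 1 1 (\<lambda>_. e)) = [:-e, 1:]"
    by (simp add: char_poly_defs Determinant.det_def sign_def)
  finally show ?thesis .
qed

lemma isometry_mat_diag_block:
  assumes "isometry_mat m m U"
  shows "isometry_mat (Suc m) (Suc m) (diag_block 1 U)"
proof -
  note U = isometry_matD[OF assms]
  have "mat_adjoint (diag_block 1 U) * diag_block 1 U = diag_block 1 (mat_adjoint U * U)"
    using U by (simp add: mat_adjoint_diag_block diag_block_mult[of _ m])
  then show ?thesis using U unfolding isometry_mat_def by (simp add: diag_block_one)
qed

lemma unitary_similar_eigenvector_col: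
  fixes H :: "'a :: conjugatable_field mat"
  assumes H: "H \<in> carrier_mat n n" and W: "isometry_mat n n W" and n: "0 < n"
    and ev: "H *\<^sub>v col W 0 = e \<cdot>\<^sub>v col W 0"
  shows "col (mat_adjoint W * H * W) 0 = e \<cdot>\<^sub>v unit_vec n 0"
proof -
  note Wc = isometry_matD(1)[OF W]
  have "col (mat_adjoint W * H * W) 0 = (mat_adjoint W * H) *\<^sub>v col W 0"
    by (rule col_mult2) (use H Wc n in auto)
  also have "\<dots> = mat_adjoint W *\<^sub>v (H *\<^sub>v col W 0)"
    by (rule assoc_mult_mat_vec) (use H Wc in auto)
  also have "\<dots> = e \<cdot>\<^sub>v (mat_adjoint W *\<^sub>v col W 0)"
    unfolding ev by (rule mult_mat_vec) (use Wc in auto)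
  also have "mat_adjoint W *\<^sub>v col W 0 = col (mat_adjoint W * W) 0"
    by (rule col_mult2[symmetric]) (use Wc n in auto)
  finally show ?thesis using n by (simp add: isometry_matD(2)[OF W])
qed

lemma hermitian_first_col_diag_block:
  fixes H :: "'a :: conjugatable_field mat"
  assumes H: "H \<in> carrier_mat (Suc m) (Suc m)" and herm: "mat_adjoint H = H"
    and col0: "col H 0 = e \<cdot>\<^sub>v unit_vec (Suc m) 0"
  shows "\<exists>M. M \<in> carrier_mat m m \<and> mat_adjoint M = M \<and> H = diag_block e M"
proof -
  define M where "M = mat m m (\<lambda>(i, j). H $$ (Suc i, Suc j))"
  have first_col: "H $$ (i, 0) = (if i = 0 then e else 0)" if "i < Suc m" for i
    using arg_cong[OF col0, of "\<lambda>v. v $ i"] that H by auto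
  have entry: "H $$ (i, j) = conjugate (H $$ (j, i))" if "i < Suc m" "j < Suc m" for i j
    using arg_cong[OF herm, of "\<lambda>A. A $$ (i, j)"] that H by auto
  have "H = diag_block e M"
  proof (rule eq_matI)
    fix i j assume ij: "i < dim_row (diag_block e M)" "j < dim_col (diag_block e M)"
    show "H $$ (i, j) = diag_block e M $$ (i, j)"
    proof (cases "i = 0")
      case True
      then show ?thesis using ij entry[of 0 j] first_col[of j] by (auto simp: index_diag_block M_def)
    next
      case False
      then show ?thesis using ij first_col[of i] by (cases j) (auto simp: index_diag_block M_def)
    qed
  qed (use H in \<open>simp_all add: M_def\<close>)
  moreover have "mat_adjoint M = M"
  proof (rule eq_matI)
    fix i j assume "i < dim_row M" "j < dim_col M"
    then show "mat_adjoint M $$ (i, j) = M $$ (i, j)"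
      using entry[of "Suc i" "Suc j"] by (simp add: M_def)
  qed (simp_all add: M_def)
  moreover have "M \<in> carrier_mat m m" unfolding M_def by simp
  ultimately show ?thesis by blast
qed

lemma hermitian_deflation:
  fixes H :: "complex mat"
  assumes H: "H \<in> carrier_mat (Suc m) (Suc m)" and herm: "mat_adjoint H = H" and "eigenvalue H e"
  shows "\<exists>W M. isometry_mat (Suc m) (Suc m) W \<and> M \<in> carrier_mat m m \<and> mat_adjoint M = M \<and>
    mat_adjoint W * H * W = diag_block e M"
proof -
  obtain v where v: "v \<in> carrier_vec (Suc m)" "v \<noteq> 0\<^sub>v (Suc m)" and Hv: "H *\<^sub>v v = e \<cdot>\<^sub>v v"
    using find_eigenvector[OF H \<open>eigenvalue H e\<close>] H unfolding eigenvector_def by auto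
  obtain W c where W: "isometry_mat (Suc m) (Suc m) W" and Wv: "col W 0 = c \<cdot>\<^sub>v v"
    using unitary_completion[OF v] by blast
  note Wc = isometry_matD(1)[OF W]
  have "H *\<^sub>v col W 0 = e \<cdot>\<^sub>v col W 0"
    unfolding Wv using H v Hv by (simp add: mult_mat_vec[of _ "Suc m" "Suc m"] smult_smult_assoc mult.commute)
  then have "col (mat_adjoint W * H * W) 0 = e \<cdot>\<^sub>v unit_vec (Suc m) 0"
    using unitary_similar_eigenvector_col[OF H W] by simp
  moreover have "mat_adjoint (mat_adjoint W * H * W) = mat_adjoint W * H * W"
    using H Wc herm by (simp add: mat_adjoint_mult[of _ "Suc m" "Suc m" _ "Suc m"]
        assoc_mult_mat[of _ "Suc m" "Suc m" _ "Suc m" _ "Suc m"])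
  ultimately show ?thesis
    using hermitian_first_col_diag_block[of "mat_adjoint W * H * W" m] W Wc H by auto
qed

theorem hermitian_unitarily_diagonalizable:
  fixes H :: "complex mat"
  assumes "H \<in> carrier_mat n n" "mat_adjoint H = H" "char_poly H = (\<Prod>e\<leftarrow>es. [:-e, 1:])"
  shows "\<exists>U. isometry_mat n n U \<and> mat_adjoint U * H * U = mat_diag n (\<lambda>i. es ! i)"
  using assms
proof (induction es arbitrary: n H)
  case Nil
  then have "n = 0" using degree_monic_char_poly[of H n] by simp
  then show ?case
    by (intro exI[of _ "1\<^sub>m 0"]) (auto simp: isometry_mat_def mat_diag_def intro!: eq_matI)
next
  case (Cons e es)
  note H = Cons.prems(1) and cp = Cons.prems(3)
  obtain m where n: "n = Suc m"
    using degree_monic_char_poly[OF H] cp degree_linear_factors[of uminus "e # es"] by (cases n) auto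
  have "eigenvalue H e" unfolding eigenvalue_root_char_poly[OF H] cp by simp
  then obtain W M where W: "isometry_mat n n W" and M: "M \<in> carrier_mat m m" "mat_adjoint M = M"
    and WHW: "mat_adjoint W * H * W = diag_block e M"
    using hermitian_deflation[of H m e] H Cons.prems(2) unfolding n by blast
  have "[:-e, 1:] * char_poly M = [:-e, 1:] * (\<Prod>e\<leftarrow>es. [:-e, 1:])"
    using char_poly_similar[OF unitary_similar_mat[OF W H]] cp
    unfolding WHW char_poly_diag_block[OF M(1)] by simp
  then have "char_poly M = (\<Prod>e\<leftarrow>es. [:-e, 1:])"
    by (rule mult_left_cancel[THEN iffD1, rotated]) simp
  then obtain U' where U': "isometry_mat m m U'"
    and D': "mat_adjoint U' * M * U' = mat_diag m (\<lambda>i. es ! i)"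
    using Cons.IH[OF M] by blast
  note Wc = isometry_matD(1)[OF W] and U'c = isometry_matD(1)[OF U']
  define U where "U = W * diag_block 1 U'"
  have "isometry_mat n n U"
    unfolding U_def n by (rule isometry_mat_mult[OF W[unfolded n] isometry_mat_diag_block[OF U']])
  moreover have "mat_adjoint U * H * U = diag_block 1 (mat_adjoint U') * (mat_adjoint W * H * W) * diag_block 1 U'"
    unfolding U_def using H Wc U'c n
    by (simp add: mat_adjoint_mult[of _ n n _ n] mat_adjoint_diag_block assoc_mult_mat[of _ n n _ n _ n])
  moreover have "\<dots> = mat_diag n (\<lambda>i. (e # es) ! i)"
    unfolding WHW n mat_diag_Suc using U'c M(1) by (simp add: diag_block_mult[of _ m] D')
  ultimately show ?case by auto
qed

section \<open>Eigenvalues of the Gram matrix\<close>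

lemma proots_linear_factors: "proots (\<Prod>a\<leftarrow>as. [:- a, 1:]) = mset (as :: 'a :: idom list)"
proof (induction as)
  case (Cons a as)
  have "(\<Prod>a\<leftarrow>as. [:- a, 1:]) \<noteq> 0" by (auto simp: prod_list_zero_iff)
  then show ?case using Cons.IH by (simp add: proots_mult del: mult_pCons_left)
qed simp

lemma prod_list_mset_cong:
  assumes "mset xs = mset ys"
  shows "(\<Prod>x\<leftarrow>xs. f x) = (\<Prod>y\<leftarrow>ys. (f y :: 'b :: comm_monoid_mult))"
  by (metis assms mset_map prod_mset_prod_list)

lemma hermitian_diag_real:
  fixes H :: "complex mat"
  assumes "mat_adjoint H = H" "i < dim_row H" "i < dim_col H"
  shows "H $$ (i, i) = complex_of_real (Re (H $$ (i, i)))"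
  using arg_cong[OF assms(1), of "\<lambda>A. A $$ (i, i)"] assms(2,3)
  by (simp add: complex_eq_iff)

lemma char_poly_hermitian_real_factors:
  fixes H :: "complex mat"
  assumes H: "H \<in> carrier_mat n n" and herm: "mat_adjoint H = H"
  shows "\<exists>rs. length rs = n \<and> char_poly H = (\<Prod>r\<leftarrow>rs. [:- complex_of_real r, 1:])"
proof -
  obtain as where cp: "char_poly H = (\<Prod>a\<leftarrow>as. [:- a, 1:])" and las: "length as = n"
    using char_poly_factorized[OF H] by blast
  obtain U where U: "isometry_mat n n U" and D: "mat_adjoint U * H * U = mat_diag n (\<lambda>i. as ! i)"
    using hermitian_unitarily_diagonalizable[OF H herm cp] by blast
  have "mat_adjoint (mat_diag n (\<lambda>i. as ! i)) = mat_diag n (\<lambda>i. as ! i)"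
    unfolding D[symmetric] using H isometry_matD(1)[OF U] herm
    by (simp add: mat_adjoint_mult[of _ n n _ n] assoc_mult_mat[of _ n n _ n _ n])
  then have "as ! i = complex_of_real (Re (as ! i))" if "i < n" for i
    using hermitian_diag_real[of "mat_diag n (\<lambda>i. as ! i)" i] that by (simp add: mat_diag_def)
  then have "map complex_of_real (map Re as) = as" using las by (intro nth_equalityI) auto
  then have "char_poly H = (\<Prod>a\<leftarrow>map complex_of_real (map Re as). [:- a, 1:])" using cp by simp
  then show ?thesis using las by (intro exI[of _ "map Re as"]) (simp add: comp_def)
qed

lemma eigenvalues_desc_hermitian:
  fixes H :: "complex mat"
  assumes H: "H \<in> carrier_mat n n" and herm: "mat_adjoint H = H"
  shows "length (eigenvalues_desc H) = n" "sorted_wrt (\<ge>) (eigenvalues_desc H)"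
    "char_poly H = (\<Prod>r\<leftarrow>eigenvalues_desc H. [:- complex_of_real r, 1:])"
proof -
  obtain rs where rs: "length rs = n" and cp: "char_poly H = (\<Prod>r\<leftarrow>rs. [:- complex_of_real r, 1:])"
    using char_poly_hermitian_real_factors[OF H herm] by blast
  have "proots (char_poly H) = mset (map complex_of_real rs)"
    unfolding cp using proots_linear_factors[of "map complex_of_real rs"] by (simp add: comp_def)
  then have ev: "eigenvalues_desc H = rev (sort rs)"
    unfolding eigenvalues_desc_def by (simp add: multiset.map_comp comp_def)
  show "length (eigenvalues_desc H) = n" "sorted_wrt (\<ge>) (eigenvalues_desc H)"
    unfolding ev using rs by (simp_all add: sorted_wrt_rev)
  show "char_poly H = (\<Prod>r\<leftarrow>eigenvalues_desc H. [:- complex_of_real r, 1:])"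
    unfolding cp ev by (rule prod_list_mset_cong) simp
qed

lemma gram_eigen_decomposition:
  fixes A :: "complex mat"
  assumes A: "A \<in> carrier_mat n n"
  defines "lam \<equiv> eigenvalues_desc (mat_adjoint A * A)"
  shows "length lam = n" "sorted_wrt (\<ge>) lam"
    "\<exists>U. isometry_mat n n U \<and>
       mat_adjoint U * (mat_adjoint A * A) * U = mat_diag n (\<lambda>i. complex_of_real (lam ! i))"
proof -
  have H: "mat_adjoint A * A \<in> carrier_mat n n" using A by simp
  have herm: "mat_adjoint (mat_adjoint A * A) = mat_adjoint A * A"
    using A by (simp add: mat_adjoint_mult[of _ n n _ n])
  note ev = eigenvalues_desc_hermitian[OF H herm, folded lam_def]
  show "length lam = n" "sorted_wrt (\<ge>) lam" by (fact ev(1), fact ev(2))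
  have "char_poly (mat_adjoint A * A) = (\<Prod>e\<leftarrow>map complex_of_real lam. [:- e, 1:])"
    using ev(3) by (simp add: comp_def)
  moreover have "mat_diag n (\<lambda>i. map complex_of_real lam ! i) = mat_diag n (\<lambda>i. complex_of_real (lam ! i))"
    using ev(1) by (intro eq_matI) (auto simp: mat_diag_def)
  ultimately show "\<exists>U. isometry_mat n n U \<and>
       mat_adjoint U * (mat_adjoint A * A) * U = mat_diag n (\<lambda>i. complex_of_real (lam ! i))"
    using hermitian_unitarily_diagonalizable[OF H herm] by metis
qed

section \<open>The Frobenius norm and Ky Fan's principle\<close>

definition frobenius_sq :: "complex mat \<Rightarrow> real" where
  "frobenius_sq M = (\<Sum>i<dim_row M. \<Sum>j<dim_col M. (cmod (M $$ (i, j)))\<^sup>2)"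

lemma index_adjoint_mult_self:
  fixes T :: "complex mat"
  assumes "i < dim_col T" "j < dim_col T"
  shows "(mat_adjoint T * T) $$ (i, j) = (\<Sum>l<dim_row T. cnj (T $$ (l, i)) * T $$ (l, j))"
  using assms by (subst index_mult_mat_sum[of _ _ "dim_row T" _ "dim_col T"]) auto

lemma diag_adjoint_mult_self:
  fixes T :: "complex mat"
  assumes "j < dim_col T"
  shows "(mat_adjoint T * T) $$ (j, j) = complex_of_real (\<Sum>l<dim_row T. (cmod (T $$ (l, j)))\<^sup>2)"
  unfolding index_adjoint_mult_self[OF assms assms] of_real_sum
  by (simp only: cnj_mult_self_cmod)

lemma Re_trace_adjoint_mult_self: "Re (mat_trace (mat_adjoint T * T)) = frobenius_sq T"
proof -
  have "Re (mat_trace (mat_adjoint T * T)) = (\<Sum>j<dim_col T. \<Sum>i<dim_row T. (cmod (T $$ (i, j)))\<^sup>2)"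
    unfolding mat_trace_def Re_sum
  proof (intro sum.cong)
    fix j assume "j \<in> {..<dim_col T}"
    then show "Re ((mat_adjoint T * T) $$ (j, j)) = (\<Sum>i<dim_row T. (cmod (T $$ (i, j)))\<^sup>2)"
      using diag_adjoint_mult_self[of j T] by simp
  qed simp
  then show ?thesis unfolding frobenius_sq_def by (simp add: sum.swap[of _ "{..<dim_col T}"])
qed

lemma frobenius_norm_eq_sqrt: "frobenius_norm T = sqrt (frobenius_sq T)"
  unfolding frobenius_norm_def Re_trace_adjoint_mult_self ..

lemma isometry_col_norm:
  assumes "isometry_mat n k V" "j < k"
  shows "(\<Sum>l<n. (cmod (V $$ (l, j)))\<^sup>2) = 1"
proof -
  have "complex_of_real (\<Sum>l<n. (cmod (V $$ (l, j)))\<^sup>2) = (mat_adjoint V * V) $$ (j, j)"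
    using assms isometry_matD[OF assms(1)] diag_adjoint_mult_self[of j V] by auto
  also have "\<dots> = 1" using assms isometry_matD[OF assms(1)] by simp
  finally show ?thesis by (simp only: of_real_eq_1_iff)
qed

lemma frobenius_sq_isometry:
  assumes "isometry_mat n k V"
  shows "frobenius_sq V = real k"
proof -
  have "frobenius_sq V = (\<Sum>j<k. \<Sum>i<n. (cmod (V $$ (i, j)))\<^sup>2)"
    using isometry_matD(1)[OF assms] unfolding frobenius_sq_def by (auto intro: sum.swap)
  also have "\<dots> = real k" using isometry_col_norm[OF assms] by simp
  finally show ?thesis .
qed

lemma isometry_row_norm_le_1:
  assumes W: "isometry_mat n k W" and i: "i < n"
  shows "(\<Sum>j<k. (cmod (W $$ (i, j)))\<^sup>2) \<le> 1"
proof -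
  \<comment> \<open>\<open>P = W W\<^sup>*\<close> is an orthogonal projection, so \<open>w = P\<^sub>i\<^sub>i = \<Sum>\<^sub>l |P\<^sub>l\<^sub>i|\<^sup>2 \<ge> w\<^sup>2\<close>\<close>
  define P where "P = W * mat_adjoint W"
  define w where "w = (\<Sum>j<k. (cmod (W $$ (i, j)))\<^sup>2)"
  note Wc = isometry_matD(1)[OF W]
  have P: "P \<in> carrier_mat n n" unfolding P_def using Wc by simp
  have "P * P = W * (mat_adjoint W * (W * mat_adjoint W))"
    unfolding P_def by (rule assoc_mult_mat) (use Wc in auto)
  also have "mat_adjoint W * (W * mat_adjoint W) = (mat_adjoint W * W) * mat_adjoint W"
    by (rule assoc_mult_mat[symmetric]) (use Wc in auto)
  finally have idem: "P * P = P" unfolding isometry_matD(2)[OF W] P_def using Wc by simp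
  have "mat_adjoint P = P" unfolding P_def using Wc by (simp add: mat_adjoint_mult[of _ n k _ n])
  then have "P = mat_adjoint P * P" using idem by simp
  then have "P $$ (i, i) = complex_of_real (\<Sum>l<n. (cmod (P $$ (l, i)))\<^sup>2)"
    using diag_adjoint_mult_self[of i P] P i by simp
  moreover have "P $$ (i, i) = complex_of_real (\<Sum>l<k. (cmod (mat_adjoint W $$ (l, i)))\<^sup>2)"
    using diag_adjoint_mult_self[of i "mat_adjoint W"] Wc i unfolding P_def by simp
  moreover have "(\<Sum>l<k. (cmod (mat_adjoint W $$ (l, i)))\<^sup>2) = w"
    unfolding w_def using Wc i by simp
  ultimately have Pii: "P $$ (i, i) = complex_of_real w" "w = (\<Sum>l<n. (cmod (P $$ (l, i)))\<^sup>2)"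
    using of_real_eq_iff by metis+
  have "(cmod (P $$ (i, i)))\<^sup>2 \<le> (\<Sum>l<n. (cmod (P $$ (l, i)))\<^sup>2)"
    using i by (intro member_le_sum) auto
  moreover have "w \<ge> 0" unfolding w_def by (simp add: sum_nonneg)
  then have "cmod (P $$ (i, i)) = w" using Pii(1) by simp
  ultimately have "w * w \<le> 1 * w" using Pii(2) by (metis power2_eq_square mult_1)
  then show ?thesis
    using \<open>w \<ge> 0\<close> mult_right_le_imp_le[of w w 1] unfolding w_def[symmetric] by fastforce
qed

lemma weighted_sum_le_top_sum:
  fixes d w :: "nat \<Rightarrow> real"
  assumes antimono: "\<And>i j. i \<le> j \<Longrightarrow> j < n \<Longrightarrow> d j \<le> d i"
    and w: "\<And>i. i < n \<Longrightarrow> 0 \<le> w i \<and> w i \<le> 1"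
    and sum_w: "(\<Sum>i<n. w i) = real k"
  shows "(\<Sum>i<n. d i * w i) \<le> (\<Sum>i<k. d i)"
proof -
  have "real k \<le> real n"
    using sum_mono[of "{..<n}" w "\<lambda>_. 1"] w sum_w by auto
  then have kn: "k \<le> n" by simp
  define ind where "ind i = (if i < k then 1 else 0 :: real)" for i
  \<comment> \<open>\<open>c\<close> separates the \<open>k\<close> largest values from the others; for \<open>k = 0\<close> the truncated
    index \<open>k - 1 = 0\<close> still works, as \<open>d 0\<close> bounds every \<open>d i\<close>\<close>
  define c where "c = d (k - 1)"
  have "(\<Sum>i<n. d i * w i) - (\<Sum>i<k. d i) = (\<Sum>i<n. (d i - c) * (w i - ind i)) + c * ((\<Sum>i<n. w i) - k)"
  proof -
    have "(\<Sum>i<n. f i * ind i) = (\<Sum>i<k. f i)" for f :: "nat \<Rightarrow> real"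
    proof -
      have "(\<Sum>i<n. f i * ind i) = (\<Sum>i<k. f i * ind i)"
        using kn by (intro sum.mono_neutral_right) (auto simp: ind_def)
      then show ?thesis by (simp add: ind_def)
    qed
    from this[of d] this[of "\<lambda>_. 1"]
    have "(\<Sum>i<k. d i) = (\<Sum>i<n. d i * ind i)" and "(\<Sum>i<n. ind i) = real k" by simp_all
    then show ?thesis
      by (simp add: algebra_simps sum.distrib sum_subtractf flip: sum_distrib_left)
  qed
  also have "\<dots> \<le> 0"
  proof -
    have "(d i - c) * (w i - ind i) \<le> 0" if "i < n" for i
    proof (cases "i < k")
      case True
      then show ?thesis
        using antimono[of i "k - 1"] w[OF that] kn by (simp add: ind_def c_def mult_nonneg_nonpos)
    next
      case False
      then show ?thesis
        using antimono[of "k - 1" i] w[OF that] that by (simp add: ind_def c_def mult_nonpos_nonneg)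
    qed
    then have "(\<Sum>i<n. (d i - c) * (w i - ind i)) \<le> 0" by (intro sum_nonpos) simp
    then show ?thesis using sum_w by simp
  qed
  finally show ?thesis by simp
qed

lemma Re_trace_adjoint_diag_mult:
  fixes W :: "complex mat"
  assumes W: "W \<in> carrier_mat n k"
  shows "Re (mat_trace (mat_adjoint W * (mat_diag n (\<lambda>i. complex_of_real (d i)) * W)))
    = (\<Sum>i<n. d i * (\<Sum>j<k. (cmod (W $$ (i, j)))\<^sup>2))"
proof -
  let ?D = "mat_diag n (\<lambda>i. complex_of_real (d i))"
  have "Re ((mat_adjoint W * (?D * W)) $$ (j, j)) = (\<Sum>i<n. d i * (cmod (W $$ (i, j)))\<^sup>2)"
    if j: "j < k" for j
  proof -
    have "(mat_adjoint W * (?D * W)) $$ (j, j) = (\<Sum>i<n. cnj (W $$ (i, j)) * (d i * W $$ (i, j)))"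
      using W j by (subst index_mult_mat_sum[of _ k n _ k]) (auto simp: mat_diag_mult_left[OF W])
    also have "\<dots> = (\<Sum>i<n. complex_of_real (d i * (cmod (W $$ (i, j)))\<^sup>2))"
      by (intro sum.cong refl) (simp add: cnj_mult_self_cmod mult.left_commute)
    finally show ?thesis by (simp only: Re_sum Re_complex_of_real)
  qed
  then have "Re (mat_trace (mat_adjoint W * (?D * W))) = (\<Sum>j<k. \<Sum>i<n. d i * (cmod (W $$ (i, j)))\<^sup>2)"
    using W unfolding mat_trace_def Re_sum by (intro sum.cong) auto
  then show ?thesis by (simp add: sum.swap[of _ "{..<k}"] sum_distrib_left)
qed

lemma frobenius_sq_mult_diagonalized:
  fixes A M :: "complex mat"
  assumes A: "A \<in> carrier_mat n n" and U: "isometry_mat n n U"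
    and diag: "mat_adjoint U * (mat_adjoint A * A) * U = mat_diag n (\<lambda>i. complex_of_real (d i))"
    and M: "M \<in> carrier_mat n k"
  shows "frobenius_sq (A * M) = (\<Sum>i<n. d i * (\<Sum>j<k. (cmod ((mat_adjoint U * M) $$ (i, j)))\<^sup>2))"
proof -
  define D where "D = mat_diag n (\<lambda>i. complex_of_real (d i))"
  have Dc: "D \<in> carrier_mat n n" unfolding D_def by simp
  note Uc = isometry_matD(1)[OF U]
  have "U * D * mat_adjoint U = (U * mat_adjoint U) * (mat_adjoint A * A) * (U * mat_adjoint U)"
    unfolding D_def diag[symmetric] using A Uc by (simp add: assoc_mult_mat[of _ n n _ n _ n])
  then have gram: "mat_adjoint A * A = U * (D * mat_adjoint U)"
    using A Uc Dc by (simp add: unitary_mult_adjoint[OF U])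
  have "mat_adjoint (A * M) * (A * M) = mat_adjoint M * (mat_adjoint A * A) * M"
    using A M by (simp add: mat_adjoint_mult[of _ n n _ k] assoc_mult_mat[of _ k n _ n _ k]
        assoc_mult_mat[of _ k n _ n _ n])
  also have "\<dots> = mat_adjoint (mat_adjoint U * M) * (D * (mat_adjoint U * M))"
    unfolding gram using Uc M Dc
    by (simp add: mat_adjoint_mult[of _ n n _ k] assoc_mult_mat[of _ k n _ n _ k]
        assoc_mult_mat[of _ n n _ n _ k])
  finally show ?thesis
    unfolding Re_trace_adjoint_mult_self[symmetric] D_def
    using Re_trace_adjoint_diag_mult[of "mat_adjoint U * M" n k d] Uc M by simp
qed

lemma ky_fan_upper_bound:
  fixes A V :: "complex mat"
  assumes A: "A \<in> carrier_mat n n" and U: "isometry_mat n n U"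
    and diag: "mat_adjoint U * (mat_adjoint A * A) * U = mat_diag n (\<lambda>i. complex_of_real (d i))"
    and antimono: "\<And>i j. i \<le> j \<Longrightarrow> j < n \<Longrightarrow> d j \<le> d i"
    and V: "isometry_mat n k V"
  shows "frobenius_sq (A * V) \<le> (\<Sum>i<k. d i)"
proof -
  define W where "W = mat_adjoint U * V"
  have W: "isometry_mat n k W"
    unfolding W_def using isometry_mat_mult[OF isometry_mat_adjoint[OF U] V] .
  have "frobenius_sq (A * V) = (\<Sum>i<n. d i * (\<Sum>j<k. (cmod (W $$ (i, j)))\<^sup>2))"
    unfolding W_def by (rule frobenius_sq_mult_diagonalized[OF A U diag isometry_matD(1)[OF V]])
  also have "\<dots> \<le> (\<Sum>i<k. d i)"
  proof (rule weighted_sum_le_top_sum[OF antimono])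
    show "0 \<le> (\<Sum>j<k. (cmod (W $$ (i, j)))\<^sup>2) \<and> (\<Sum>j<k. (cmod (W $$ (i, j)))\<^sup>2) \<le> 1"
      if "i < n" for i
      using isometry_row_norm_le_1[OF W that] by (simp add: sum_nonneg)
    show "(\<Sum>i<n. \<Sum>j<k. (cmod (W $$ (i, j)))\<^sup>2) = real k"
      using frobenius_sq_isometry[OF W] isometry_matD(1)[OF W] unfolding frobenius_sq_def by auto
  qed
  finally show ?thesis .
qed

lemma ky_fan_attained:
  fixes A :: "complex mat"
  assumes A: "A \<in> carrier_mat n n" and U: "isometry_mat n n U"
    and diag: "mat_adjoint U * (mat_adjoint A * A) * U = mat_diag n (\<lambda>i. complex_of_real (d i))"
    and kn: "k \<le> n"
  shows "\<exists>V. isometry_mat n k V \<and> frobenius_sq (A * V) = (\<Sum>i<k. d i)"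
proof -
  define E :: "complex mat" where "E = mat n k (\<lambda>(i, j). if i = j then 1 else 0)"
  have "mat_adjoint E * E = 1\<^sub>m k"
  proof (rule eq_matI)
    fix i j assume "i < dim_row (1\<^sub>m k :: complex mat)" "j < dim_col (1\<^sub>m k :: complex mat)"
    moreover have "cnj (if l = i then 1 else 0) * (if l = j then 1 else 0) =
      (if l = i \<and> l = j then 1 else (0 :: complex))" for l by simp
    ultimately show "(mat_adjoint E * E) $$ (i, j) = 1\<^sub>m k $$ (i, j)"
      using kn by (subst index_mult_mat_sum[of _ k n _ k]) (auto simp: E_def)
  qed (simp_all add: E_def)
  then have E: "isometry_mat n k E" unfolding isometry_mat_def E_def by simp
  have "mat_adjoint U * (U * E) = E"
    using isometry_matD[OF U] by (simp add: E_def flip: assoc_mult_mat[of _ n n _ n _ k])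
  then have "frobenius_sq (A * (U * E)) = (\<Sum>i<n. d i * (\<Sum>j<k. (cmod (E $$ (i, j)))\<^sup>2))"
    using frobenius_sq_mult_diagonalized[OF A U diag, of "U * E" k] isometry_matD(1)[OF U]
    by (simp add: E_def)
  also have "\<dots> = (\<Sum>i<n. if i < k then d i else 0)"
  proof (intro sum.cong refl)
    fix i assume "i \<in> {..<n}"
    have "(cmod (if i = j then 1 else 0 :: complex))\<^sup>2 = (if i = j then 1 else 0)" for j by simp
    then have "(\<Sum>j<k. (cmod (E $$ (i, j)))\<^sup>2) = (if i < k then 1 else 0)"
      using \<open>i \<in> {..<n}\<close> by (simp add: E_def)
    then show "d i * (\<Sum>j<k. (cmod (E $$ (i, j)))\<^sup>2) = (if i < k then d i else 0)" by simp
  qed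
  also have "\<dots> = (\<Sum>i\<in>{..<n} \<inter> {i. i < k}. d i)"
    by (simp add: sum.inter_restrict)
  also have "{..<n} \<inter> {i. i < k} = {..<k}" using kn by auto
  finally show ?thesis using isometry_mat_mult[OF U E] by blast
qed

lemma frobenius_sq_eq_sum_diagonalized:
  fixes A :: "complex mat"
  assumes A: "A \<in> carrier_mat n n" and U: "isometry_mat n n U"
    and diag: "mat_adjoint U * (mat_adjoint A * A) * U = mat_diag n (\<lambda>i. complex_of_real (d i))"
  shows "frobenius_sq A = (\<Sum>i<n. d i)"
proof -
  note Uc = isometry_matD(1)[OF U]
  have "frobenius_sq A = (\<Sum>i<n. d i * (\<Sum>j<n. (cmod (mat_adjoint U $$ (i, j)))\<^sup>2))"
    using frobenius_sq_mult_diagonalized[OF A U diag, of "1\<^sub>m n" n] A Uc by simp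
  also have "\<dots> = (\<Sum>i<n. d i)"
    using isometry_col_norm[OF U] Uc by simp
  finally show ?thesis .
qed

definition ky_fan_sq :: "nat \<Rightarrow> complex mat \<Rightarrow> real" where
  "ky_fan_sq k A = (\<Sum>i<k. eigenvalues_desc (mat_adjoint A * A) ! i)"

lemma sorted_wrt_ge_nth:
  assumes "sorted_wrt (\<ge>) xs" "i \<le> j" "j < length xs"
  shows "xs ! j \<le> (xs ! i :: 'a :: order)"
  using assms by (cases "i = j") (auto simp: sorted_wrt_iff_nth_less)

lemma ky_fan_sq_upper_bound:
  assumes "A \<in> carrier_mat n n" "isometry_mat n k V"
  shows "frobenius_sq (A * V) \<le> ky_fan_sq k A"
  using gram_eigen_decomposition[OF assms(1)] ky_fan_upper_bound[OF assms(1) _ _ _ assms(2)]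
    sorted_wrt_ge_nth unfolding ky_fan_sq_def by blast

lemma ky_fan_sq_attained:
  assumes "A \<in> carrier_mat n n" "k \<le> n"
  shows "\<exists>V. isometry_mat n k V \<and> frobenius_sq (A * V) = ky_fan_sq k A"
  using gram_eigen_decomposition(3)[OF assms(1)] ky_fan_attained[OF assms(1) _ _ assms(2)]
  unfolding ky_fan_sq_def by blast

lemma frobenius_sq_eq_ky_fan_sq:
  assumes "A \<in> carrier_mat n n"
  shows "frobenius_sq A = ky_fan_sq n A"
  using gram_eigen_decomposition(3)[OF assms] frobenius_sq_eq_sum_diagonalized[OF assms]
  unfolding ky_fan_sq_def by blast

section \<open>Maximum principles\<close>

lemma holomorphic_Re_max_imp_const:
  assumes "f holomorphic_on S" "open S" "connected S" "z0 \<in> S"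
    and max: "\<And>z. z \<in> S \<Longrightarrow> Re (f z) \<le> Re (f z0)" and "z \<in> S"
  shows "Re (f z) = Re (f z0)"
proof -
  have "(\<lambda>z. exp (f z)) constant_on S"
  proof (rule maximum_modulus_principle[OF _ assms(2,3,2) order_refl assms(4)])
    show "(\<lambda>z. exp (f z)) holomorphic_on S"
      using assms(1) by (rule holomorphic_on_exp')
    show "cmod (exp (f z)) \<le> cmod (exp (f z0))" if "z \<in> S" for z
      using max[OF that] by simp
  qed
  then have "exp (f z) = exp (f z0)"
    using assms(4,6) unfolding constant_on_def by force
  then have "exp (Re (f z)) = exp (Re (f z0))" by (metis norm_exp_eq_Re)
  then show ?thesis by simp
qed

lemma cmod_diff_sq: "(cmod (a - b))\<^sup>2 = (cmod a)\<^sup>2 + (cmod b)\<^sup>2 - 2 * Re (cnj b * a)"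
  unfolding cmod_power2 by (simp add: power2_eq_square algebra_simps)

lemma holomorphic_sum_norm_sq_max_imp_const:
  fixes f :: "'i \<Rightarrow> complex \<Rightarrow> complex"
  assumes I: "finite I" and S: "open S" "connected S" "z0 \<in> S"
    and hol: "\<And>i. i \<in> I \<Longrightarrow> f i holomorphic_on S"
    and max: "\<And>z. z \<in> S \<Longrightarrow> (\<Sum>i\<in>I. (cmod (f i z))\<^sup>2) \<le> (\<Sum>i\<in>I. (cmod (f i z0))\<^sup>2)"
    and z: "z \<in> S" and i: "i \<in> I"
  shows "f i z = f i z0"
proof -
  define g where "g z = (\<Sum>i\<in>I. cnj (f i z0) * f i z)" for z
  have dist_sum: "(\<Sum>i\<in>I. (cmod (f i z - f i z0))\<^sup>2)
      = (\<Sum>i\<in>I. (cmod (f i z))\<^sup>2) + (\<Sum>i\<in>I. (cmod (f i z0))\<^sup>2) - 2 * Re (g z)" for z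
    by (simp add: cmod_diff_sq g_def Re_sum sum.distrib sum_subtractf sum_distrib_left)
  have g0: "Re (g z0) = (\<Sum>i\<in>I. (cmod (f i z0))\<^sup>2)"
    using dist_sum[of z0] by simp
  have "Re (g z) \<le> Re (g z0)" if "z \<in> S" for z
    using dist_sum[of z] max[OF that] sum_nonneg[of I "\<lambda>i. (cmod (f i z - f i z0))\<^sup>2"] g0 by simp
  then have "Re (g z) = Re (g z0)"
    using holomorphic_Re_max_imp_const[of g S z0 z] S z hol unfolding g_def
    by (simp add: holomorphic_on_sum holomorphic_on_mult holomorphic_on_const)
  then have "(\<Sum>i\<in>I. (cmod (f i z - f i z0))\<^sup>2) \<le> 0"
    using dist_sum[of z] max[OF z] g0 by simp
  then have "(cmod (f i z - f i z0))\<^sup>2 = 0"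
    using sum_nonneg_eq_0_iff[OF I, of "\<lambda>i. (cmod (f i z - f i z0))\<^sup>2"] i
    by (simp add: order_antisym sum_nonneg)
  then show ?thesis by simp
qed

lemma frobenius_sq_max_imp_const:
  fixes G :: "complex \<Rightarrow> complex mat"
  assumes S: "open S" "connected S" "z0 \<in> S"
    and dim: "\<And>z. z \<in> S \<Longrightarrow> G z \<in> carrier_mat n k"
    and hol: "\<And>i j. i < n \<Longrightarrow> j < k \<Longrightarrow> (\<lambda>z. G z $$ (i, j)) holomorphic_on S"
    and max: "\<And>z. z \<in> S \<Longrightarrow> frobenius_sq (G z) \<le> frobenius_sq (G z0)"
    and z: "z \<in> S"
  shows "G z = G z0"
proof (rule eq_matI)
  let ?I = "{..<n} \<times> {..<k}"
  have frob: "frobenius_sq (G z) = (\<Sum>q\<in>?I. (cmod (G z $$ q))\<^sup>2)" if "z \<in> S" for z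
    using dim[OF that] unfolding frobenius_sq_def by (simp add: sum.cartesian_product)
  have hol_entry: "(\<lambda>z. G z $$ q) holomorphic_on S" if "q \<in> ?I" for q
    using hol that by (cases q) auto
  have max_entries: "(\<Sum>q\<in>?I. (cmod (G z $$ q))\<^sup>2) \<le> (\<Sum>q\<in>?I. (cmod (G z0 $$ q))\<^sup>2)"
    if "z \<in> S" for z
    using max[OF that] unfolding frob[OF that] frob[OF S(3)] .
  fix i j assume "i < dim_row (G z0)" "j < dim_col (G z0)"
  then have "(i, j) \<in> ?I" using dim[OF S(3)] by auto
  from holomorphic_sum_norm_sq_max_imp_const[OF _ S hol_entry max_entries z this]
  show "G z $$ (i, j) = G z0 $$ (i, j)" by simp
qed (use dim[OF z] dim[OF S(3)] in auto)

lemma holomorphic_on_index_mult_mat: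
  fixes F :: "complex \<Rightarrow> complex mat"
  assumes dim: "\<And>z. z \<in> S \<Longrightarrow> F z \<in> carrier_mat n m"
    and hol: "\<And>i l. i < n \<Longrightarrow> l < m \<Longrightarrow> (\<lambda>z. F z $$ (i, l)) holomorphic_on S"
    and V: "V \<in> carrier_mat m k" and i: "i < n" and j: "j < k"
  shows "(\<lambda>z. (F z * V) $$ (i, j)) holomorphic_on S"
proof -
  have "(\<lambda>z. \<Sum>l<m. F z $$ (i, l) * V $$ (l, j)) holomorphic_on S"
    using hol i by (intro holomorphic_on_sum holomorphic_on_mult holomorphic_on_const) auto
  then show ?thesis
    by (rule holomorphic_cong[THEN iffD1, rotated 2])
      (use dim V i j in \<open>auto simp: index_mult_mat_sum[of _ n m _ k]\<close>)
qed

lemma ky_fan_sq_max_imp_const: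
  fixes F :: "complex \<Rightarrow> complex mat"
  assumes S: "open S" "connected S" "z0 \<in> S"
    and dim: "\<And>z. z \<in> S \<Longrightarrow> F z \<in> carrier_mat n n"
    and hol: "\<And>i j. i < n \<Longrightarrow> j < n \<Longrightarrow> (\<lambda>z. F z $$ (i, j)) holomorphic_on S"
    and kn: "k \<le> n"
    and max: "\<And>z. z \<in> S \<Longrightarrow> ky_fan_sq k (F z) \<le> ky_fan_sq k (F z0)"
    and z: "z \<in> S"
  shows "ky_fan_sq k (F z) = ky_fan_sq k (F z0)"
proof -
  obtain V where V: "isometry_mat n k V" and V0: "frobenius_sq (F z0 * V) = ky_fan_sq k (F z0)"
    using ky_fan_sq_attained[OF dim[OF S(3)] kn] by blast
  note Vc = isometry_matD(1)[OF V]
  have "F z * V = F z0 * V"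
  proof (rule frobenius_sq_max_imp_const[OF S _ _ _ z])
    show "F z * V \<in> carrier_mat n k" if "z \<in> S" for z using dim[OF that] Vc by simp
    show "(\<lambda>z. (F z * V) $$ (i, j)) holomorphic_on S" if "i < n" "j < k" for i j
      using holomorphic_on_index_mult_mat[OF dim hol Vc that] .
    show "frobenius_sq (F z * V) \<le> frobenius_sq (F z0 * V)" if "z \<in> S" for z
      using ky_fan_sq_upper_bound[OF dim[OF that] V] max[OF that] V0 by simp
  qed
  then have "ky_fan_sq k (F z0) \<le> ky_fan_sq k (F z)"
    using ky_fan_sq_upper_bound[OF dim[OF z] V] V0 by simp
  then show ?thesis using max[OF z] by simp
qed

lemma singular_values_max_imp_ky_fan_sq_const:
  fixes F :: "complex \<Rightarrow> complex mat"
  assumes S: "open S" "connected S"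
    and dim: "\<And>z. z \<in> S \<Longrightarrow> F z \<in> carrier_mat n n"
    and hol: "\<And>i j. i < n \<Longrightarrow> j < n \<Longrightarrow> (\<lambda>z. F z $$ (i, j)) holomorphic_on S"
    and max: "\<forall>k\<in>{1..n}. \<exists>zk\<in>S. \<forall>z\<in>S. singular_value (F z) k \<le> singular_value (F zk) k"
  shows "k \<le> n \<Longrightarrow> z \<in> S \<Longrightarrow> w \<in> S \<Longrightarrow> ky_fan_sq k (F z) = ky_fan_sq k (F w)"
proof (induction k arbitrary: z w)
  case 0
  then show ?case by (simp add: ky_fan_sq_def)
next
  case (Suc k)
  let ?ev = "\<lambda>z. eigenvalues_desc (mat_adjoint (F z) * F z) ! k"
  have "Suc k \<in> {1..n}" using Suc.prems(1) by simp
  then obtain zk where zk: "zk \<in> S"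
    and sv: "\<And>z. z \<in> S \<Longrightarrow> singular_value (F z) (Suc k) \<le> singular_value (F zk) (Suc k)"
    using max by blast
  have le: "?ev z \<le> ?ev zk" if "z \<in> S" for z
    using sv[OF that] by (simp add: singular_value_def)
  \<comment> \<open>the first \<open>k\<close> terms are constant, so a maximum of \<open>s\<^sub>k\<^sub>+\<^sub>1\<close> is a maximum of the whole sum\<close>
  have split: "ky_fan_sq (Suc k) (F z) = ky_fan_sq k (F zk) + ?ev z" if "z \<in> S" for z
    using Suc.IH[OF _ that zk] Suc.prems(1) by (simp add: ky_fan_sq_def)
  have "ky_fan_sq (Suc k) (F z) = ky_fan_sq (Suc k) (F zk)" if "z \<in> S" for z
    using ky_fan_sq_max_imp_const[OF S zk dim hol Suc.prems(1) _ that] split le zk by simp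
  then show ?case using Suc.prems(2,3) by simp
qed

lemma frobenius_norm_max_imp_const:
  fixes F :: "complex \<Rightarrow> complex mat"
  assumes S: "open S" "connected S"
    and dim: "\<And>z. z \<in> S \<Longrightarrow> F z \<in> carrier_mat n n"
    and hol: "\<And>i j. i < n \<Longrightarrow> j < n \<Longrightarrow> (\<lambda>z. F z $$ (i, j)) holomorphic_on S"
    and max: "\<exists>z0\<in>S. \<forall>z\<in>S. frobenius_norm (F z) \<le> frobenius_norm (F z0)"
  shows "\<forall>z\<in>S. \<forall>w\<in>S. F z = F w"
proof -
  obtain z0 where z0: "z0 \<in> S" and le: "\<And>z. z \<in> S \<Longrightarrow> frobenius_sq (F z) \<le> frobenius_sq (F z0)"
    using max by (auto simp: frobenius_norm_eq_sqrt)
  have "F z = F z0" if "z \<in> S" for z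
    using frobenius_sq_max_imp_const[OF S z0 dim hol le that] .
  then show ?thesis by simp
qed

lemma singular_values_max_imp_const:
  fixes F :: "complex \<Rightarrow> complex mat"
  assumes S: "open S" "connected S" "S \<noteq> {}"
    and dim: "\<And>z. z \<in> S \<Longrightarrow> F z \<in> carrier_mat n n"
    and hol: "\<And>i j. i < n \<Longrightarrow> j < n \<Longrightarrow> (\<lambda>z. F z $$ (i, j)) holomorphic_on S"
    and max: "\<forall>k\<in>{1..n}. \<exists>zk\<in>S. \<forall>z\<in>S. singular_value (F z) k \<le> singular_value (F zk) k"
  shows "\<forall>z\<in>S. \<forall>w\<in>S. F z = F w"
proof (rule frobenius_norm_max_imp_const[OF S(1,2) dim hol])
  obtain p where p: "p \<in> S" using S(3) by blast
  show "\<exists>z0\<in>S. \<forall>z\<in>S. frobenius_norm (F z) \<le> frobenius_norm (F z0)"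
  proof (intro bexI[OF _ p] ballI)
    fix z assume z: "z \<in> S"
    show "frobenius_norm (F z) \<le> frobenius_norm (F p)"
      using singular_values_max_imp_ky_fan_sq_const[OF S(1,2) dim hol max order_refl z p]
      by (simp add: frobenius_norm_eq_sqrt frobenius_sq_eq_ky_fan_sq[OF dim[OF z]]
          frobenius_sq_eq_ky_fan_sq[OF dim[OF p]])
  qed
qed

theorem corollary6:
  fixes \<Omega> :: "complex set" and F :: "complex \<Rightarrow> complex mat" and n :: nat
  assumes region: "open \<Omega>" "connected \<Omega>" "\<Omega> \<noteq> {}"
    and dim: "\<And>z. z \<in> \<Omega> \<Longrightarrow> F z \<in> carrier_mat n n"
    and analytic: "\<And>i j. i < n \<Longrightarrow> j < n \<Longrightarrow> (\<lambda>z. F z $$ (i, j)) analytic_on \<Omega>"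
  shows "((\<forall>z\<in>\<Omega>. \<forall>w\<in>\<Omega>. F z = F w)
            \<longleftrightarrow> (\<forall>k\<in>{1..n}. \<forall>z\<in>\<Omega>. \<forall>w\<in>\<Omega>. singular_value (F z) k = singular_value (F w) k))
       \<and> ((\<forall>z\<in>\<Omega>. \<forall>w\<in>\<Omega>. F z = F w)
            \<longleftrightarrow> (\<forall>k\<in>{1..n}. \<exists>zk\<in>\<Omega>. \<forall>z\<in>\<Omega>. singular_value (F z) k \<le> singular_value (F zk) k))
       \<and> ((\<forall>z\<in>\<Omega>. \<forall>w\<in>\<Omega>. F z = F w)
            \<longleftrightarrow> (\<forall>z\<in>\<Omega>. \<forall>w\<in>\<Omega>. frobenius_norm (F z) = frobenius_norm (F w)))
       \<and> ((\<forall>z\<in>\<Omega>. \<forall>w\<in>\<Omega>. F z = F w)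
            \<longleftrightarrow> (\<exists>z0\<in>\<Omega>. \<forall>z\<in>\<Omega>. frobenius_norm (F z) \<le> frobenius_norm (F z0)))"
proof -
  have hol: "\<And>i j. i < n \<Longrightarrow> j < n \<Longrightarrow> (\<lambda>z. F z $$ (i, j)) holomorphic_on \<Omega>"
    using analytic by (rule analytic_imp_holomorphic)
  obtain p where p: "p \<in> \<Omega>" using region(3) by blast
  have const_sv: "\<forall>k\<in>{1..n}. \<forall>z\<in>\<Omega>. \<forall>w\<in>\<Omega>. singular_value (F z) k = singular_value (F w) k"
    and const_frob: "\<forall>z\<in>\<Omega>. \<forall>w\<in>\<Omega>. frobenius_norm (F z) = frobenius_norm (F w)"
    if "\<forall>z\<in>\<Omega>. \<forall>w\<in>\<Omega>. F z = F w"
    using that by metis+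
  have sv_const: "\<forall>k\<in>{1..n}. \<exists>zk\<in>\<Omega>. \<forall>z\<in>\<Omega>. singular_value (F z) k \<le> singular_value (F zk) k"
    if "\<forall>k\<in>{1..n}. \<forall>z\<in>\<Omega>. \<forall>w\<in>\<Omega>. singular_value (F z) k = singular_value (F w) k"
    using that p by (metis order_refl)
  have frob_const: "\<exists>z0\<in>\<Omega>. \<forall>z\<in>\<Omega>. frobenius_norm (F z) \<le> frobenius_norm (F z0)"
    if "\<forall>z\<in>\<Omega>. \<forall>w\<in>\<Omega>. frobenius_norm (F z) = frobenius_norm (F w)"
    using that p by (metis order_refl)
  show ?thesis
    using singular_values_max_imp_const[of \<Omega> F n] frobenius_norm_max_imp_const[of \<Omega> F n]
      region dim hol const_sv const_frob sv_const frob_const by blast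
qed

end
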